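(* Let $F_v$ be a non-archimedean local field with ring of integers $\mathcal{O}_{F_v}$, uniformizer $\varpi_v$ and residue field of size $q_v$. Let $e_v\ge0$ be an integer and let $\phi_v$ be the characteristic function of $\mathrm{Z}(F_v)\mathrm{K}_{v,e_v}$. For $s\in\mathbb{C}$ with $\Re(s)>1$ let \[ Z_v(s,\phi_v)=\int_{\mathrm{GL}_2(\mathcal{O}_{F_v})}\int_{F_v^\times}\phi_v\!\left(\kappa^{-1}\begin{pmatrix}1&y\\0&1\end{pmatrix}\kappa\right)|y|_v^{s}\,d_v^\times y\,d\kappa, \] and \[ g_v(s)=\frac{1}{q_v+1}\left(q_v^{1-e_vs}+(q_v-1)q_v^{(2-e_v)s-1}\frac{q_v^{(2s-1)[e_v/2]}-1}{q_v^{2s-1}-1}+q_v^{-[e_v/2]}\right). \] Then $Z_v(s,\phi_v)=\dfrac{g_v(s)}{1-q_v^{-s}}$.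
   Context: $\mathrm{Z}(F_v)$ is the center of $\mathrm{GL}_2(F_v)$; $\mathrm{K}_{v,e}=\{\begin{pmatrix}a&b\\c&d\end{pmatrix}\in\mathrm{GL}_2(\mathcal{O}_{F_v}):\varpi_v^e\mid c\}$; $d\kappa$ is the Haar measure on $\mathrm{GL}_2(\mathcal{O}_{F_v})$ of total volume $1$; $d_v^\times y=\frac{q_v}{q_v-1}\frac{d_vy}{|y|_v}$ where $d_vy$ is the additive Haar measure with $\mathrm{Vol}(\mathcal{O}_{F_v})=1$; $[\cdot]$ denotes the integer part. *)

theory Defs
  imports "HOL-Analysis.Analysis"
begin

text \<open>2x2 matrices over a field, represented as quadruples (a,b,c,d) = [[a,b],[c,d]].\<close>

type_synonym 'a m2 = "'a \<times> 'a \<times> 'a \<times> 'a"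

fun m2mult :: "'a::field m2 \<Rightarrow> 'a m2 \<Rightarrow> 'a m2" where
  "m2mult (a,b,c,d) (a',b',c',d') =
     (a*a' + b*c', a*b' + b*d', c*a' + d*c', c*b' + d*d')"

fun m2det :: "'a::field m2 \<Rightarrow> 'a" where
  "m2det (a,b,c,d) = a*d - b*c"

fun m2inv :: "'a::field m2 \<Rightarrow> 'a m2" where
  "m2inv (a,b,c,d) = (let D = a*d - b*c in (d/D, -b/D, -c/D, a/D))"

fun m2entries :: "'a m2 \<Rightarrow> 'a list" where
  "m2entries (a,b,c,d) = [a,b,c,d]"

fun m2lower :: "'a m2 \<Rightarrow> 'a" where
  "m2lower (a,b,c,d) = c"

definition intO :: "('a::field \<Rightarrow> real) \<Rightarrow> 'a set" where
  "intO absv = {x. absv x \<le> 1}"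

text \<open>Non-archimedean local field: complete w.r.t. a discrete non-archimedean
 absolute value, normalized so that the uniformizer has absolute value 1/q,
 with residue field O/(varpi O) of size q.\<close>
definition nonarch_local_field :: "('a::field \<Rightarrow> real) \<Rightarrow> nat \<Rightarrow> 'a \<Rightarrow> bool" where
  "nonarch_local_field absv q unif \<longleftrightarrow>
     (\<forall>x. 0 \<le> absv x) \<and> (\<forall>x. absv x = 0 \<longleftrightarrow> x = 0) \<and>
     (\<forall>x y. absv (x * y) = absv x * absv y) \<and>
     (\<forall>x y. absv (x + y) \<le> max (absv x) (absv y)) \<and>
     2 \<le> q \<and> absv unif = 1 / real q \<and>
     (\<forall>x. x \<noteq> 0 \<longrightarrow> (\<exists>n::int. absv x = real q powi n)) \<and>
     (\<exists>R. finite R \<and> card R = q \<and> R \<subseteq> intO absv \<and>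
          (\<forall>x\<in>intO absv. \<exists>!r\<in>R. absv (x - r) < 1)) \<and>
     (\<forall>X::nat \<Rightarrow> 'a. (\<forall>\<epsilon>>0. \<exists>N. \<forall>m\<ge>N. \<forall>n\<ge>N. absv (X m - X n) < \<epsilon>) \<longrightarrow>
          (\<exists>L. \<forall>\<epsilon>>0. \<exists>N. \<forall>n\<ge>N. absv (X n - L) < \<epsilon>))"

definition additive_haar :: "('a::field \<Rightarrow> real) \<Rightarrow> 'a measure \<Rightarrow> bool" where
  "additive_haar absv \<mu> \<longleftrightarrow>
     space \<mu> = UNIV \<and>
     sets \<mu> = sigma_sets UNIV {{x. absv (x - a) \<le> r} | a r. True} \<and>
     (\<forall>a. \<forall>A\<in>sets \<mu>. (\<lambda>x. a + x) ` A \<in> sets \<mu> \<and>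
                       emeasure \<mu> ((\<lambda>x. a + x) ` A) = emeasure \<mu> A) \<and>
     emeasure \<mu> (intO absv) = 1"

definition GL2O :: "('a::field \<Rightarrow> real) \<Rightarrow> 'a m2 set" where
  "GL2O absv = {g. set (m2entries g) \<subseteq> intO absv \<and> absv (m2det g) = 1}"

definition K0 :: "('a::field \<Rightarrow> real) \<Rightarrow> nat \<Rightarrow> nat \<Rightarrow> 'a m2 set" where
  "K0 absv q e = {g \<in> GL2O absv. absv (m2lower g) \<le> (1 / real q) ^ e}"

definition ZK0 :: "('a::field \<Rightarrow> real) \<Rightarrow> nat \<Rightarrow> nat \<Rightarrow> 'a m2 set" where
  "ZK0 absv q e = {m2mult (z,0,0,z) k | z k. z \<noteq> 0 \<and> k \<in> K0 absv q e}"

definition gl2O_haar :: "('a::field \<Rightarrow> real) \<Rightarrow> 'a m2 measure \<Rightarrow> bool" where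
  "gl2O_haar absv \<mu> \<longleftrightarrow>
     space \<mu> = GL2O absv \<and>
     sets \<mu> = sigma_sets (GL2O absv)
        {GL2O absv \<inter> {k. \<forall>i<4. absv (m2entries k ! i - m2entries g ! i) \<le> r} | g r. True} \<and>
     emeasure \<mu> (GL2O absv) = 1 \<and>
     (\<forall>g\<in>GL2O absv. \<forall>A\<in>sets \<mu>. m2mult g ` A \<in> sets \<mu> \<and>
                       emeasure \<mu> (m2mult g ` A) = emeasure \<mu> A)"

text \<open>The local zeta integral Z_v(s, phi_v), with d^x y = q/(q-1) dy/|y|.\<close>
definition Zv :: "('a::field \<Rightarrow> real) \<Rightarrow> nat \<Rightarrow> 'a measure \<Rightarrow> 'a m2 measure \<Rightarrow> nat \<Rightarrow> complex \<Rightarrow> complex" where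
  "Zv absv q dy dk e s =
     (LINT \<kappa>|dk. (LINT y|dy.
        (if y = 0 then 0 else
           complex_of_real (real q / (real q - 1)) *
           complex_of_real (indicator (ZK0 absv q e) (m2mult (m2inv \<kappa>) (m2mult (1, y, 0, 1) \<kappa>))) *
           complex_of_real (absv y) powr s / complex_of_real (absv y))))"

definition gv :: "nat \<Rightarrow> nat \<Rightarrow> complex \<Rightarrow> complex" where
  "gv q e s = (1 / (of_nat q + 1)) *
     (of_nat q powr (1 - of_nat e * s)
      + (of_nat q - 1) * of_nat q powr ((2 - of_nat e) * s - 1) *
          ((of_nat q powr ((2 * s - 1) * of_nat (e div 2)) - 1) / (of_nat q powr (2 * s - 1) - 1))
      + of_nat q powr (- of_nat (e div 2)))"

end

theory Submission
  imports Defs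
begin

(*
  Write X = q^(-s) and n(y) for the unipotent matrix with upper right entry y.  For
  kappa = (a, b; c, d) in GL2(O) the conjugate kappa^-1 n(y) kappa has determinant 1 and lower
  left entry -y c^2 / det kappa, so it lies in Z K_e iff |y| <= 1 and |y| |c|^2 <= q^-e.  On the
  shell |y| = q^-n, whose d^x y-volume is 1, this says kappa lies in K_j with j = ceil((e - n)/2)
  (and j = 0 for n >= e), so the inner integral is sum_n [kappa in K_j] X^n and Z_v(s) is the
  power series sum_n vol(K_j) X^n.  The coset decompositions GL2(O) = (disjoint union over
  residues t of n^-(t) K_1) + w K_1 and K_j = disjoint union of n^-(varpi^j t) K_(j+1), j >= 1,
  give vol(K_j) = 1 / ((q + 1) q^(j-1)).  The resulting series S_e satisfies
  S_(e+1) = vol(K_ceil((e+1)/2)) + X S_e, S_0 = 1 / (1 - X), and so does g_v(s) / (1 - X).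
*)

section \<open>Power series and integrals\<close>

lemma norm_of_nat_powr_neg_less:
  assumes "1 < q" and "0 < Re s"
  shows "norm ((of_nat q :: complex) powr (- s)) < 1"
proof -
  have "norm ((of_nat q :: complex) powr (- s)) = real q powr (- Re s)"
    using norm_powr_real_powr[of "of_nat q" "- s"] by simp
  also have "\<dots> < 1"
    using assms by (intro powr_less_one) auto
  finally show ?thesis .
qed

lemma of_real_power_powr:
  assumes "0 < x"
  shows "complex_of_real (x ^ m) powr s = (complex_of_real x powr s) ^ m"
proof -
  have "complex_of_real (x ^ m) powr s = exp (of_nat m * (s * of_real (ln x)))"
    using assms by (simp add: powr_def Ln_of_real ln_realpow algebra_simps del: of_real_power)
  also have "\<dots> = (complex_of_real x powr s) ^ m"
    using assms by (simp add: powr_def Ln_of_real exp_of_nat_mult)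
  finally show ?thesis .
qed

lemma of_real_inverse_power_powr:
  assumes "0 < q"
  shows "complex_of_real ((1 / real q) ^ m) powr s = ((of_nat q :: complex) powr (- s)) ^ m"
proof -
  have "complex_of_real (1 / real q) powr s = (of_nat q :: complex) powr (- s)"
    using assms by (simp add: powr_def Ln_of_real ln_div Ln_of_nat del: of_real_divide)
  then show ?thesis
    using assms by (simp add: of_real_power_powr del: of_real_power of_real_divide)
qed

lemma measure_UN_disjoint_const:
  assumes "finite I" "disjoint_family_on A I" "\<And>i. i \<in> I \<Longrightarrow> A i \<in> sets M"
    and "\<And>i. i \<in> I \<Longrightarrow> emeasure M (A i) \<noteq> \<infinity>" "\<And>i. i \<in> I \<Longrightarrow> measure M (A i) = m"
  shows "measure M (\<Union>i\<in>I. A i) = real (card I) * m"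
  using measure_finite_Union[of I A M] assms by auto

lemma sums_integral_indicator_series:
  fixes h :: "nat \<Rightarrow> 'b::{banach, second_countable_topology}"
  assumes sets: "\<And>n. A n \<in> sets M" and finite: "\<And>n. emeasure M (A n) \<noteq> \<infinity>"
    and pointwise: "\<And>x. summable (\<lambda>n. indicator (A n) x * norm (h n))"
    and summable: "summable (\<lambda>n. measure M (A n) * norm (h n))"
  shows "(\<lambda>n. measure M (A n) *\<^sub>R h n) sums (\<integral>x. (\<Sum>n. indicator (A n) x *\<^sub>R h n) \<partial>M)"
proof -
  have integrable: "integrable M (indicator (A n) :: _ \<Rightarrow> real)" for n
    using sets finite by (simp add: less_top)
  have A_Int_space: "A n \<inter> space M = A n" for n
    using sets.sets_into_space[OF sets] by blast
  have "(\<lambda>n. integral\<^sup>L M (\<lambda>x. indicator (A n) x *\<^sub>R h n)) sums (\<integral>x. (\<Sum>n. indicator (A n) x *\<^sub>R h n) \<partial>M)"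
  proof (rule sums_integral)
    show "integrable M (\<lambda>x. indicator (A n) x *\<^sub>R h n)" for n
      using integrable by simp
    show "AE x in M. summable (\<lambda>n. norm (indicator (A n) x *\<^sub>R h n))"
      using pointwise by simp
    have "(\<integral>x. norm (indicator (A n) x *\<^sub>R h n) \<partial>M) = measure M (A n) * norm (h n)" for n
      using integrable by (simp add: A_Int_space)
    then show "summable (\<lambda>n. \<integral>x. norm (indicator (A n) x *\<^sub>R h n) \<partial>M)"
      using summable by presburger
  qed
  then show ?thesis
    using integrable by (simp add: A_Int_space)
qed

definition K0_volume :: "nat \<Rightarrow> nat \<Rightarrow> real" where
  "K0_volume q j = (if j = 0 then 1 else 1 / ((real q + 1) * real q ^ (j - 1)))"

lemma K0_volume_le_1:
  assumes "0 < q"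
  shows "K0_volume q j \<le> 1"
proof -
  have "1 \<le> real q ^ (j - 1)"
    using assms by simp
  then have "1 * 1 \<le> (real q + 1) * real q ^ (j - 1)"
    by (intro mult_mono) auto
  then show ?thesis
    by (simp add: K0_volume_def)
qed

text \<open>\<open>gv\<close> as a rational function of \<open>X = q\<^sup>-\<^sup>s\<close>, with the geometric quotient expanded.\<close>

definition gv_X :: "nat \<Rightarrow> complex \<Rightarrow> nat \<Rightarrow> complex" where
  "gv_X q X e = (of_nat q * X^e + (of_nat q - 1) * X^e * (\<Sum>i<e div 2. 1 / (X^2 * of_nat q) ^ Suc i)
      + 1 / of_nat q ^ (e div 2)) / (of_nat q + 1)"

lemma gv_X_Suc_scaled:
  assumes "0 < q" and "X \<noteq> 0"
  defines "Q \<equiv> of_nat q :: complex"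
  shows "(Q + 1) * gv_X q X (Suc e) = (1 - X) / Q ^ (e div 2) + X * ((Q + 1) * gv_X q X e)"
proof -
  define S where "S m = (\<Sum>i<m. 1 / (X^2 * Q) ^ Suc i)" for m
  define k where "k = e div 2"
  have "Q \<noteq> 0" "Q + 1 \<noteq> 0"
    using assms(1) unfolding Q_def by (simp, metis add.commute of_nat_Suc of_nat_eq_0_iff Zero_not_Suc)
  have gv: "(Q + 1) * gv_X q X n = Q * X^n + (Q - 1) * X^n * S (n div 2) + 1 / Q^(n div 2)" for n
    using \<open>Q + 1 \<noteq> 0\<close> by (simp add: gv_X_def Q_def S_def)
  show ?thesis
  proof (cases "even e")
    case True
    then have "Suc e div 2 = k"
      unfolding k_def by presburger
    then show ?thesis
      unfolding gv k_def[symmetric] using \<open>Q \<noteq> 0\<close> by (simp add: field_simps)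
  next
    case False
    then have e: "Suc e = 2 * Suc k" "Suc e div 2 = Suc k"
      unfolding k_def by presburger+
    have top: "X ^ Suc e * (1 / (X^2 * Q) ^ Suc k) = 1 / Q ^ Suc k"
      using assms(2) unfolding e(1) power_mult by (simp add: power_mult_distrib)
    have "(Q - 1) * X ^ Suc e * S (Suc k) =
        (Q - 1) * X ^ Suc e * S k + (Q - 1) * (X ^ Suc e * (1 / (X^2 * Q) ^ Suc k))"
      by (simp add: S_def algebra_simps)
    also have "\<dots> = (Q - 1) * X ^ Suc e * S k + (1 / Q ^ k - 1 / Q ^ Suc k)"
      unfolding top using \<open>Q \<noteq> 0\<close> by (simp add: field_simps)
    finally show ?thesis
      unfolding gv k_def[symmetric] e(2) by (simp add: divide_inverse algebra_simps)
  qed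
qed

lemma gv_X_Suc:
  assumes "0 < q" and "X \<noteq> 0"
  shows "gv_X q X (Suc e) = (1 - X) * of_real (K0_volume q (Suc (e div 2))) + X * gv_X q X e"
proof -
  define Q where "Q = (of_nat q :: complex)"
  define V :: complex where "V = of_real (K0_volume q (Suc (e div 2)))"
  have "Q + 1 \<noteq> 0"
    unfolding Q_def by (metis add.commute of_nat_Suc of_nat_eq_0_iff Zero_not_Suc)
  then have V: "(Q + 1) * V = 1 / Q ^ (e div 2)"
    by (simp add: V_def K0_volume_def Q_def)
  have "(Q + 1) * ((1 - X) * V + X * gv_X q X e) = (1 - X) * ((Q + 1) * V) + X * ((Q + 1) * gv_X q X e)"
    by (simp add: algebra_simps)
  also have "\<dots> = (1 - X) / Q ^ (e div 2) + X * ((Q + 1) * gv_X q X e)"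
    unfolding V by simp
  also have "\<dots> = (Q + 1) * gv_X q X (Suc e)"
    unfolding Q_def by (rule gv_X_Suc_scaled[OF assms, symmetric])
  finally show ?thesis
    using \<open>Q + 1 \<noteq> 0\<close> unfolding V_def by simp
qed

lemma K0_volume_series_sums:
  assumes "0 < q" and "norm X < 1" and "X \<noteq> 0"
  shows "(\<lambda>n. of_real (K0_volume q ((e - n + 1) div 2)) * X^n) sums (gv_X q X e / (1 - X))"
proof (induction e)
  case 0
  have "(of_nat q + 1 :: complex) \<noteq> 0"
    by (metis add.commute of_nat_Suc of_nat_eq_0_iff Zero_not_Suc)
  then have "gv_X q X 0 = 1"
    by (simp add: gv_X_def)
  then show ?case
    using geometric_sums[OF assms(2)] by (simp add: K0_volume_def)
next
  case (Suc e)
  define f where "f n = of_real (K0_volume q ((Suc e - n + 1) div 2)) * X^n" for n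
  have "(\<lambda>n. f (Suc n)) = (\<lambda>n. X * (of_real (K0_volume q ((e - n + 1) div 2)) * X^n))"
    by (simp add: f_def algebra_simps)
  then have "(\<lambda>n. f (Suc n)) sums (X * (gv_X q X e / (1 - X)))"
    using sums_mult[OF Suc.IH] by metis
  then have "f sums (X * (gv_X q X e / (1 - X)) + f 0)"
    by (simp add: sums_Suc_iff)
  moreover have "1 - X \<noteq> 0"
    using assms(2) by auto
  then have "X * (gv_X q X e / (1 - X)) + f 0 = gv_X q X (Suc e) / (1 - X)"
    by (simp add: f_def gv_X_Suc[OF assms(1,3)] field_simps)
  ultimately show ?case
    unfolding f_def by simp
qed

text \<open>This keeps the geometric quotient in \<^const>\<open>gv\<close> away from \<open>0 / 0\<close>.\<close>

lemma of_nat_powr_neg_square_mult_neq_1: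
  assumes "1 < q" and "1 < Re s"
  shows "((of_nat q :: complex) powr (- s)) ^ 2 * of_nat q \<noteq> 1"
proof -
  define X where "X = (of_nat q :: complex) powr (- s)"
  have "norm X = real q powr (- Re s)"
    unfolding X_def using norm_powr_real_powr[of "of_nat q" "- s"] by simp
  also have "\<dots> < real q powr (- 1)"
    using assms by (intro powr_less_mono) auto
  finally have "norm X < 1 / real q"
    using assms(1) by (simp add: powr_minus_divide)
  then have "norm X ^ 2 * real q < (1 / real q) ^ 2 * real q"
    using assms(1) by (intro mult_strict_right_mono power_strict_mono) auto
  also have "\<dots> < 1"
    using assms(1) by (simp add: power2_eq_square field_simps)
  finally have "norm (X ^ 2 * of_nat q) < 1"
    by (simp add: norm_mult norm_power)
  then show ?thesis
    unfolding X_def by auto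
qed

lemma gv_eq_gv_X:
  assumes "1 < q" and "1 < Re s"
  shows "gv q e s = gv_X q ((of_nat q :: complex) powr (- s)) e"
proof -
  define Q where "Q = (of_nat q :: complex)"
  define X where "X = Q powr (- s)"
  define r where "r = 1 / (X^2 * Q)"
  define k where "k = e div 2"
  have Q: "Q \<noteq> 0"
    using assms(1) by (simp add: Q_def)
  have pow: "Q powr (of_nat n * u) = (Q powr u) ^ n" for n u
    using Q by (simp add: powr_power)
  have "Q powr (2 * s - 1) * (X^2 * Q) = Q powr ((2 * s - 1) + of_nat 2 * (- s) + 1)"
    unfolding X_def pow[symmetric] powr_add by simp
  then have r: "Q powr (2 * s - 1) = r"
    using Q unfolding r_def by (simp add: field_simps X_def)
  have t1: "Q powr (1 - of_nat e * s) = Q * X^e"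
    using pow[of e "- s"] Q by (simp add: X_def powr_diff field_simps powr_minus)
  have t2: "Q powr ((2 - of_nat e) * s - 1) = X^e * r"
  proof -
    have "(2 - of_nat e) * s - 1 = of_nat e * (- s) + (2 * s - 1)"
      by (simp add: algebra_simps)
    then show ?thesis
      by (simp only: powr_add pow r X_def)
  qed
  have t3: "Q powr ((2 * s - 1) * of_nat k) = r ^ k"
    by (simp only: mult.commute[of _ "of_nat k"] pow r)
  have t4: "Q powr (- of_nat k) = 1 / Q ^ k"
    using Q by (simp add: powr_minus_divide)
  have "r \<noteq> 1"
    using of_nat_powr_neg_square_mult_neq_1[OF assms] unfolding r_def X_def Q_def by auto
  then have "(r ^ k - 1) / (r - 1) = (\<Sum>i<k. r ^ i)"
    by (simp add: geometric_sum)
  moreover have "r * (\<Sum>i<k. r ^ i) = (\<Sum>i<k. 1 / (X^2 * Q) ^ Suc i)"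
    unfolding r_def by (simp add: sum_distrib_left power_one_over)
  ultimately show ?thesis
    unfolding gv_def gv_X_def Q_def[symmetric] X_def[symmetric] k_def[symmetric] t1 t2 t3 t4 r
    by (simp add: mult.assoc)
qed

section \<open>Matrices over a non-archimedean field\<close>

lemma m2mult_assoc: "m2mult (m2mult x y) z = m2mult x (m2mult y (z::'a::field m2))"
  by (cases x rule: prod_cases4; cases y rule: prod_cases4; cases z rule: prod_cases4)
     (simp add: algebra_simps)

lemma m2det_mult: "m2det (m2mult x y) = m2det x * m2det (y::'a::field m2)"
  by (cases x rule: prod_cases4; cases y rule: prod_cases4) (simp add: algebra_simps)

lemma m2mult_1_left [simp]: "m2mult (1,0,0,1) x = (x::'a::field m2)"
  by (cases x rule: prod_cases4) simp

lemma m2_conj_unipotent: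
  assumes "D = a*d - b*c" and "D \<noteq> 0"
  shows "m2mult (m2inv (a,b,c,d)) (m2mult (1,y,0,1) (a,b,c,d)) =
    (1 + y*c*d/D, y*d*d/D, -(y*c*c)/D, 1 - y*c*d/D)"
proof -
  have "m2inv (a,b,c,d) = (d/D, -b/D, -c/D, a/D)"
    using assms(1) by (simp add: Let_def)
  moreover have "d*(a + y*c) - b*c = D + y*c*d" "-c*(b + y*d) + a*d = D - y*c*d"
    using assms(1) by (simp_all add: algebra_simps)
  ultimately show ?thesis
    using assms(2) by (simp add: field_simps)
qed

locale nonarch_abs =
  fixes absv :: "'a::field \<Rightarrow> real"
  assumes abs_nonneg: "0 \<le> absv x"
    and abs_eq_0_iff [simp]: "absv x = 0 \<longleftrightarrow> x = 0"
    and abs_mult [simp]: "absv (x * y) = absv x * absv y"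
    and abs_add_le_max: "absv (x + y) \<le> max (absv x) (absv y)"
begin

lemma abs_0 [simp]: "absv 0 = 0"
  by simp

lemma abs_pos: "x \<noteq> 0 \<Longrightarrow> 0 < absv x"
  using abs_nonneg[of x] by (simp add: order_less_le)

lemma abs_one [simp]: "absv 1 = 1"
  using abs_mult[of 1 1] abs_pos[of 1] by simp

lemma abs_minus [simp]: "absv (- x) = absv x"
proof -
  have "absv (-1) ^ 2 = 1 ^ 2"
    using abs_mult[of "-1" "-1"] by (simp add: power2_eq_square)
  then have "absv (-1) = 1"
    using abs_nonneg[of "-1"] by (rule power2_eq_imp_eq) simp
  then show ?thesis
    using abs_mult[of "-1" x] by simp
qed

lemma abs_minus_commute: "absv (x - y) = absv (y - x)"
  by (metis minus_diff_eq abs_minus)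

lemma abs_inverse [simp]: "absv (inverse x) = inverse (absv x)"
  by (cases "x = 0") (simp_all add: field_simps flip: abs_mult)

lemma abs_divide [simp]: "absv (x / y) = absv x / absv y"
  by (simp add: divide_inverse)

lemma abs_power [simp]: "absv (x ^ n) = absv x ^ n"
  by (induction n) auto

lemma abs_diff_le_max: "absv (x - y) \<le> max (absv x) (absv y)"
  using abs_add_le_max[of x "-y"] by simp

lemma abs_add_le: "absv x \<le> r \<Longrightarrow> absv y \<le> r \<Longrightarrow> absv (x + y) \<le> r"
  using abs_add_le_max[of x y] by simp

lemma abs_diff_le: "absv x \<le> r \<Longrightarrow> absv y \<le> r \<Longrightarrow> absv (x - y) \<le> r"
  using abs_diff_le_max[of x y] by simp

lemma abs_diff_lt: "absv x < r \<Longrightarrow> absv y < r \<Longrightarrow> absv (x - y) < r"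
  using abs_diff_le_max[of x y] by simp

lemma abs_mult_le_1: "absv x \<le> 1 \<Longrightarrow> absv y \<le> 1 \<Longrightarrow> absv (x * y) \<le> 1"
  using abs_nonneg[of x] abs_nonneg[of y] by (simp add: mult_le_one)

lemma abs_mult_lt_1: "absv x \<le> 1 \<Longrightarrow> absv y < 1 \<Longrightarrow> absv (x * y) < 1"
  using abs_nonneg[of x] abs_nonneg[of y] mult_left_le_one_le[of "absv y" "absv x"] by simp

lemma GL2O_iff: "(a,b,c,d) \<in> GL2O absv \<longleftrightarrow>
   absv a \<le> 1 \<and> absv b \<le> 1 \<and> absv c \<le> 1 \<and> absv d \<le> 1 \<and> absv (a*d - b*c) = 1"
  by (auto simp: GL2O_def intO_def)

lemma GL2O_mult: "g \<in> GL2O absv \<Longrightarrow> h \<in> GL2O absv \<Longrightarrow> m2mult g h \<in> GL2O absv"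
proof -
  assume g: "g \<in> GL2O absv" and h: "h \<in> GL2O absv"
  have det: "absv (m2det (m2mult g h)) = 1"
    using g h by (simp add: m2det_mult GL2O_def)
  show ?thesis
    using g h det
    by (cases g rule: prod_cases4; cases h rule: prod_cases4)
       (simp only: GL2O_iff m2mult.simps m2det.simps, auto intro!: abs_add_le abs_mult_le_1)
qed

lemma GL2O_swap_rows: "(a,b,c,d) \<in> GL2O absv \<Longrightarrow> (c,d,a,b) \<in> GL2O absv"
  using abs_minus_commute[of "a*d" "b*c"] by (simp add: GL2O_iff mult.commute)

text \<open>Both statements hold because the determinant is a unit.\<close>

lemma GL2O_upper_left_unit:
  assumes g: "(a,b,c,d) \<in> GL2O absv" and "absv c < 1"
  shows "absv a = 1"
proof (rule ccontr)
  assume "absv a \<noteq> 1"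
  with g have "absv a < 1" by (simp add: GL2O_iff)
  with assms have "absv (d*a) < 1" "absv (b*c) < 1"
    by (simp_all add: GL2O_iff abs_mult_lt_1 del: abs_mult)
  then have "absv (a*d - b*c) < 1"
    by (simp add: abs_diff_lt mult.commute del: abs_mult)
  with g show False by (simp add: GL2O_iff)
qed

lemma GL2O_lower_row_unit:
  assumes g: "(a,b,c,d) \<in> GL2O absv"
  shows "absv c = 1 \<or> absv d = 1"
proof (rule ccontr)
  assume "\<not> (absv c = 1 \<or> absv d = 1)"
  with g have "absv c < 1" "absv d < 1" by (auto simp: GL2O_iff)
  with g have "absv (a*d) < 1" "absv (b*c) < 1"
    by (simp_all add: GL2O_iff abs_mult_lt_1 del: abs_mult)
  then have "absv (a*d - b*c) < 1"
    by (simp add: abs_diff_lt del: abs_mult)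
  with g show False by (simp add: GL2O_iff)
qed

lemma K0_iff: "(a,b,c,d) \<in> K0 absv q j \<longleftrightarrow> (a,b,c,d) \<in> GL2O absv \<and> absv c \<le> (1 / real q) ^ j"
  by (simp add: K0_def)

lemma ZK0_iff_K0:
  assumes "m2det M = 1"
  shows "M \<in> ZK0 absv q e \<longleftrightarrow> M \<in> K0 absv q e"
proof
  assume "M \<in> K0 absv q e"
  then show "M \<in> ZK0 absv q e"
    unfolding ZK0_def by (metis (mono_tags, lifting) m2mult_1_left mem_Collect_eq one_neq_zero)
next
  assume "M \<in> ZK0 absv q e"
  then obtain z k1 k2 k3 k4 where z: "z \<noteq> 0" and k: "(k1,k2,k3,k4) \<in> K0 absv q e"
    and M: "M = (z*k1, z*k2, z*k3, z*k4)"
    unfolding ZK0_def by (auto simp: m2mult.simps)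
  have "m2det M = z^2 * (k1*k4 - k2*k3)"
    unfolding M by (simp add: algebra_simps power2_eq_square)
  with assms have "absv (z^2) * absv (k1*k4 - k2*k3) = 1"
    by (metis abs_mult abs_one)
  with k have "absv z ^ 2 = 1"
    by (simp add: K0_iff GL2O_iff del: abs_mult)
  then have "absv z = 1"
    using abs_nonneg[of z] by (simp add: power2_eq_1_iff)
  moreover have "absv (m2det M) = 1"
    using assms by simp
  ultimately show "M \<in> K0 absv q e"
    using k unfolding M by (simp add: K0_def GL2O_def intO_def del: m2det.simps)
qed

text \<open>The conjugate of the unipotent matrix with upper right entry \<open>y\<close> by \<open>\<kappa>\<close> has lower left
  entry \<open>-y c\<^sup>2 / det \<kappa>\<close>; it is integral iff \<open>y\<close> is, because \<open>c\<close> or \<open>d\<close> is a unit.\<close>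

lemma conj_unipotent_in_ZK0_iff:
  assumes k: "(a,b,c,d) \<in> GL2O absv"
  shows "m2mult (m2inv (a,b,c,d)) (m2mult (1,y,0,1) (a,b,c,d)) \<in> ZK0 absv q e \<longleftrightarrow>
     absv y \<le> 1 \<and> absv y * absv c ^ 2 \<le> (1 / real q) ^ e"
proof -
  define D where "D = a*d - b*c"
  have D1: "absv D = 1" using k by (simp add: GL2O_iff D_def)
  then have "D \<noteq> 0" by auto
  note conj = m2_conj_unipotent[OF D_def this, of y]
  have det: "m2det (1 + y*c*d/D, y*d*d/D, -(y*c*c)/D, 1 - y*c*d/D) = 1"
    using \<open>D \<noteq> 0\<close> by (simp add: field_simps power2_eq_square)
  have cd: "absv c \<le> 1" "absv d \<le> 1" using k by (auto simp: GL2O_iff)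
  have "(1 + y*c*d/D, y*d*d/D, -(y*c*c)/D, 1 - y*c*d/D) \<in> GL2O absv \<longleftrightarrow> absv y \<le> 1"
  proof
    assume y: "absv y \<le> 1"
    then have "absv (y*c*d/D) \<le> 1" "absv (y*d*d/D) \<le> 1" "absv (-(y*c*c)/D) \<le> 1"
      using cd D1 by (simp_all add: abs_mult_le_1 del: abs_mult)
    with det show "(1 + y*c*d/D, y*d*d/D, -(y*c*c)/D, 1 - y*c*d/D) \<in> GL2O absv"
      by (simp add: GL2O_iff abs_add_le abs_diff_le del: abs_mult abs_divide)
  next
    assume "(1 + y*c*d/D, y*d*d/D, -(y*c*c)/D, 1 - y*c*d/D) \<in> GL2O absv"
    then have "absv y * absv d * absv d \<le> 1" "absv y * absv c * absv c \<le> 1"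
      using D1 by (auto simp: GL2O_iff)
    then show "absv y \<le> 1"
      using GL2O_lower_row_unit[OF k] by auto
  qed
  then show ?thesis
    unfolding conj ZK0_iff_K0[OF det] K0_def using D1
    by (simp add: power2_eq_square mult.assoc)
qed

lemma lower_unipotent_in_GL2O: "absv x \<le> 1 \<Longrightarrow> (1,0,x,1) \<in> GL2O absv"
  by (simp add: GL2O_iff)

lemma swap_in_GL2O: "(0,1,1,0) \<in> GL2O absv"
  by (simp add: GL2O_iff)

lemma image_m2mult_GL2O:
  assumes "g \<in> GL2O absv" "h \<in> GL2O absv" "m2mult h g = (1,0,0,1)" "m2mult g h = (1,0,0,1)"
    and "A \<subseteq> GL2O absv"
  shows "m2mult g ` A = {k \<in> GL2O absv. m2mult h k \<in> A}"
proof (intro equalityI subsetI)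
  fix k assume "k \<in> m2mult g ` A"
  with assms show "k \<in> {k \<in> GL2O absv. m2mult h k \<in> A}"
    by (auto simp: GL2O_mult subset_iff simp flip: m2mult_assoc)
next
  fix k assume "k \<in> {k \<in> GL2O absv. m2mult h k \<in> A}"
  moreover have "k = m2mult g (m2mult h k)"
    using assms by (simp flip: m2mult_assoc)
  ultimately show "k \<in> m2mult g ` A" by blast
qed

lemma mem_lower_unipotent_image_K0:
  assumes "absv x \<le> 1"
  shows "(a,b,c,d) \<in> m2mult (1,0,x,1) ` K0 absv q j \<longleftrightarrow>
    (a,b,c,d) \<in> GL2O absv \<and> absv (c - x*a) \<le> (1 / real q) ^ j"
proof -
  have "m2mult (1,0,x,1) ` K0 absv q j = {k \<in> GL2O absv. m2mult (1,0,-x,1) k \<in> K0 absv q j}"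
    using assms by (intro image_m2mult_GL2O lower_unipotent_in_GL2O) (auto simp: K0_def)
  moreover have "(a,b,c,d) \<in> GL2O absv \<Longrightarrow> m2mult (1,0,-x,1) (a,b,c,d) \<in> GL2O absv"
    using assms by (intro GL2O_mult lower_unipotent_in_GL2O) auto
  ultimately show ?thesis
    by (auto simp: K0_iff)
qed

lemma mem_swap_image_K0:
  "(a,b,c,d) \<in> m2mult (0,1,1,0) ` K0 absv q j \<longleftrightarrow>
    (a,b,c,d) \<in> GL2O absv \<and> absv a \<le> (1 / real q) ^ j"
proof -
  have "m2mult (0,1,1,0) ` K0 absv q j = {k \<in> GL2O absv. m2mult (0,1,1,0) k \<in> K0 absv q j}"
    by (intro image_m2mult_GL2O swap_in_GL2O) (auto simp: K0_def)
  then show ?thesis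
    using GL2O_swap_rows by (auto simp: K0_iff)
qed

definition m2ball :: "'a m2 \<Rightarrow> real \<Rightarrow> 'a m2 set" where
  "m2ball g r = GL2O absv \<inter> {k. \<forall>i<4. absv (m2entries k ! i - m2entries g ! i) \<le> r}"

lemma mem_m2ball: "(a,b,c,d) \<in> m2ball (a',b',c',d') r \<longleftrightarrow> (a,b,c,d) \<in> GL2O absv \<and>
    absv (a - a') \<le> r \<and> absv (b - b') \<le> r \<and> absv (c - c') \<le> r \<and> absv (d - d') \<le> r"
  by (simp add: m2ball_def numeral_eq_Suc less_Suc_eq all_conj_distrib conj_commute)

end

section \<open>Residue digits and cosets of K0\<close>

locale local_field = nonarch_abs absv for absv :: "'a::field \<Rightarrow> real" +
  fixes q :: nat and \<pi> :: 'a
  assumes q_ge_2: "2 \<le> q"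
    and abs_unif: "absv \<pi> = 1 / real q"
    and abs_values: "x \<noteq> 0 \<Longrightarrow> \<exists>n::int. absv x = real q powi n"
    and residue_system: "\<exists>R. finite R \<and> card R = q \<and> R \<subseteq> intO absv \<and>
          (\<forall>x\<in>intO absv. \<exists>!r\<in>R. absv (x - r) < 1)"
begin

lemma q_gt_1: "1 < real q"
  using q_ge_2 by simp

lemma q_power_le_iff: "(1 / real q) ^ n \<le> (1 / real q) ^ m \<longleftrightarrow> m \<le> n"
  using q_gt_1 by (intro power_decreasing_iff) auto

lemma abs_unif_power: "absv (\<pi> ^ n) = (1 / real q) ^ n"
  by (simp add: abs_unif)

lemma unif_power_nonzero: "\<pi> ^ n \<noteq> 0"
proof -
  have "absv \<pi> \<noteq> 0"
    using abs_unif q_gt_1 by simp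
  then show ?thesis by simp
qed

lemma abs_unif_power_mult_le_iff:
  "absv (\<pi>^j * x) \<le> (1 / real q) ^ Suc j \<longleftrightarrow> absv x \<le> 1 / real q"
proof -
  have "0 < (1 / real q) ^ j"
    using q_gt_1 by simp
  then show ?thesis
    by (simp only: abs_mult abs_unif_power power_Suc2 mult_le_cancel_left_pos)
qed

lemma abs_le_1_eq_power:
  assumes "x \<noteq> 0" and "absv x \<le> 1"
  obtains n where "absv x = (1 / real q) ^ n"
proof -
  obtain k :: int where k: "absv x = real q powi k"
    using abs_values assms(1) by blast
  have "\<not> 0 < k"
    using assms(2) one_less_power[OF q_gt_1, of "nat k"] unfolding k by (auto simp: power_int_def)
  then have "absv x = (1 / real q) ^ nat (- k)"
    unfolding k by (cases "k = 0") (auto simp: power_int_def divide_inverse)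
  then show thesis ..
qed

lemma abs_lt_1_imp_le: "absv x < 1 \<Longrightarrow> absv x \<le> 1 / real q"
proof (cases "x = 0")
  case False
  assume "absv x < 1"
  moreover obtain n where "absv x = (1 / real q) ^ n"
    using abs_le_1_eq_power[OF False] calculation by force
  ultimately show ?thesis
    using q_power_le_iff[of n 1] by (cases n) auto
qed simp

definition residues :: "'a set" where
  "residues = (SOME R. finite R \<and> card R = q \<and> R \<subseteq> intO absv \<and>
          (\<forall>x\<in>intO absv. \<exists>!r\<in>R. absv (x - r) < 1))"

lemma residues: "finite residues" "card residues = q" "residues \<subseteq> intO absv"
    "\<forall>x\<in>intO absv. \<exists>!r\<in>residues. absv (x - r) < 1"
  using someI_ex[OF residue_system] unfolding residues_def by blast+

lemma residues_le_1: "t \<in> residues \<Longrightarrow> absv t \<le> 1"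
  using residues(3) by (auto simp: intO_def)

lemma residues_eq:
  assumes "t \<in> residues" "t' \<in> residues" "absv (t - t') < 1"
  shows "t = t'"
proof -
  have "\<exists>!r\<in>residues. absv (t - r) < 1"
    using assms(1) residues(3,4) by blast
  moreover have "absv (t - t) < 1" by simp
  ultimately show ?thesis
    using assms by blast
qed

lemma residue_exists:
  assumes "absv x \<le> 1"
  shows "\<exists>t\<in>residues. absv (x - t) \<le> 1 / real q"
proof -
  obtain t where "t \<in> residues" "absv (x - t) < 1"
    using residues(4) assms by (auto simp: intO_def)
  then show ?thesis
    using abs_lt_1_imp_le by blast
qed

text \<open>\<open>absv (x - y) \<le> (1 / real q) ^ Suc j\<close> says \<open>x \<equiv> y\<close> modulo \<open>\<pi>\<^sup>j\<^sup>+\<^sup>1\<close>.\<close>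

lemma residue_digit_exists:
  assumes "absv x \<le> (1 / real q) ^ j"
  shows "\<exists>t\<in>residues. absv (x - \<pi>^j * t) \<le> (1 / real q) ^ Suc j"
proof -
  have "absv (x / \<pi>^j) \<le> 1"
    using assms q_gt_1 by (simp add: abs_unif)
  then obtain t where t: "t \<in> residues" "absv (x / \<pi>^j - t) \<le> 1 / real q"
    using residue_exists by blast
  have "x - \<pi>^j * t = \<pi>^j * (x / \<pi>^j - t)"
    using unif_power_nonzero[of j] by (simp add: field_simps)
  with t show ?thesis
    using abs_unif_power_mult_le_iff by metis
qed

lemma residue_digit_unique:
  assumes "t \<in> residues" "t' \<in> residues"
    and "absv (x - \<pi>^j * t) \<le> (1 / real q) ^ Suc j" "absv (x - \<pi>^j * t') \<le> (1 / real q) ^ Suc j"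
  shows "t = t'"
proof -
  have "absv (\<pi>^j * (t' - t)) \<le> (1 / real q) ^ Suc j"
    using abs_diff_le[OF assms(3,4)] by (simp add: algebra_simps del: abs_mult)
  then have "absv (t' - t) \<le> 1 / real q"
    by (simp only: abs_unif_power_mult_le_iff)
  also have "1 / real q < 1"
    using q_gt_1 by simp
  finally show ?thesis
    using residues_eq[OF assms(2,1)] by simp
qed

lemma residue_digit_abs_le:
  assumes "t \<in> residues" and "absv (x - \<pi>^j * t) \<le> (1 / real q) ^ Suc j"
  shows "absv x \<le> (1 / real q) ^ j"
proof -
  have "absv (x - \<pi>^j * t) \<le> (1 / real q) ^ j"
    using assms(2) q_power_le_iff[of "Suc j" j] by simp
  moreover have "absv (\<pi>^j * t) \<le> (1 / real q) ^ j"
    using residues_le_1[OF assms(1)] q_gt_1 by (simp add: abs_unif mult_left_le)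
  ultimately show ?thesis
    using abs_add_le[of "x - \<pi>^j * t" _ "\<pi>^j * t"] by simp
qed

lemma finite_net: "\<exists>F. finite F \<and> (\<forall>x. absv x \<le> 1 \<longrightarrow> (\<exists>r\<in>F. absv (x - r) \<le> (1 / real q) ^ n))"
proof (induction n)
  case 0
  show ?case by (rule exI[of _ "{0}"]) simp
next
  case (Suc n)
  then obtain F where "finite F" and F: "\<And>x. absv x \<le> 1 \<Longrightarrow> \<exists>r\<in>F. absv (x - r) \<le> (1 / real q) ^ n"
    by blast
  define F' where "F' = (\<lambda>(r,t). r + \<pi>^n * t) ` (F \<times> residues)"
  have "\<exists>r'\<in>F'. absv (x - r') \<le> (1 / real q) ^ Suc n" if x: "absv x \<le> 1" for x
  proof -
    obtain r where r: "r \<in> F" "absv (x - r) \<le> (1 / real q) ^ n"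
      using F x by blast
    then obtain t where "t \<in> residues" "absv ((x - r) - \<pi>^n * t) \<le> (1 / real q) ^ Suc n"
      using residue_digit_exists by blast
    with r(1) show ?thesis
      unfolding F'_def by (intro bexI[of _ "r + \<pi>^n * t"]) (auto simp: algebra_simps)
  qed
  moreover have "finite F'"
    unfolding F'_def using \<open>finite F\<close> residues(1) by simp
  ultimately show ?case by blast
qed

lemma K0_eq_finite_UN_m2ball: "\<exists>G. finite G \<and> K0 absv q j = (\<Union>g\<in>G. m2ball g ((1 / real q) ^ j))"
proof -
  let ?r = "(1 / real q) ^ j"
  obtain F where "finite F" and F: "\<And>x. absv x \<le> 1 \<Longrightarrow> \<exists>r\<in>F. absv (x - r) \<le> ?r"
    using finite_net[of j] by blast
  define G where "G = {g \<in> F \<times> F \<times> F \<times> F. absv (m2lower g) \<le> ?r}"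
  have "K0 absv q j \<subseteq> (\<Union>g\<in>G. m2ball g ?r)"
  proof
    fix k assume "k \<in> K0 absv q j"
    then obtain a b c d where k: "k = (a,b,c,d)" "(a,b,c,d) \<in> GL2O absv" "absv c \<le> ?r"
      by (cases k rule: prod_cases4) (auto simp: K0_iff)
    then obtain ra rb rc rd where "ra \<in> F" "rb \<in> F" "rc \<in> F" "rd \<in> F"
        "absv (a - ra) \<le> ?r" "absv (b - rb) \<le> ?r" "absv (c - rc) \<le> ?r" "absv (d - rd) \<le> ?r"
      using F by (metis GL2O_iff)
    moreover have "absv rc \<le> ?r"
      using abs_diff_le[of c ?r "c - rc"] k(3) calculation by simp
    ultimately show "k \<in> (\<Union>g\<in>G. m2ball g ?r)"
      using k unfolding G_def by (intro UN_I[of "(ra,rb,rc,rd)"]) (auto simp: mem_m2ball)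
  qed
  moreover have "m2ball g ?r \<subseteq> K0 absv q j" if "g \<in> G" for g
  proof
    fix k assume "k \<in> m2ball g ?r"
    with that obtain a b c d c' where "k = (a,b,c,d)" "(a,b,c,d) \<in> GL2O absv"
        "absv (c - c') \<le> ?r" "absv c' \<le> ?r"
      unfolding G_def by (cases k rule: prod_cases4, cases g rule: prod_cases4) (auto simp: mem_m2ball)
    then show "k \<in> K0 absv q j"
      using abs_add_le[of "c - c'" _ c'] by (simp add: K0_iff)
  qed
  moreover have "finite G"
    unfolding G_def using \<open>finite F\<close> by simp
  ultimately show ?thesis by blast
qed

lemma abs_unif_power_residue_le_1:
  assumes "t \<in> residues"
  shows "absv (\<pi>^j * t) \<le> 1"
proof -
  have "(1 / real q) ^ j \<le> 1"
    using q_gt_1 by (simp add: power_le_one)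
  then show ?thesis
    using residues_le_1[OF assms] by (simp add: abs_unif mult_le_one abs_nonneg)
qed

lemma mem_lower_unipotent_residue_image_K0:
  assumes "t \<in> residues"
  shows "(a,b,c,d) \<in> m2mult (1,0,\<pi>^j*t,1) ` K0 absv q (Suc j) \<longleftrightarrow>
    (a,b,c,d) \<in> GL2O absv \<and> absv a = 1 \<and> absv (c/a - \<pi>^j*t) \<le> (1 / real q) ^ Suc j"
proof -
  let ?x = "\<pi>^j * t"
  have x: "absv ?x \<le> 1"
    using abs_unif_power_residue_le_1[OF assms] .
  have unit: "absv a = 1" if "(a,b,c,d) \<in> GL2O absv" "absv (c - ?x*a) \<le> (1 / real q) ^ Suc j"
  proof -
    have "m2mult (1,0,-?x,1) (a,b,c,d) \<in> GL2O absv"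
      using that x by (intro GL2O_mult lower_unipotent_in_GL2O) auto
    moreover have "(1 / real q) ^ Suc j < 1"
      using q_gt_1 by (intro power_Suc_less_one) auto
    ultimately show ?thesis
      using that(2) GL2O_upper_left_unit[of a b "c - ?x*a" "d - ?x*b"] by simp
  qed
  have "absv (c - ?x*a) = absv (c/a - ?x)" if "absv a = 1"
  proof -
    from that have "c - ?x*a = a * (c/a - ?x)"
      by (auto simp: field_simps)
    with that show ?thesis by simp
  qed
  then show ?thesis
    using unit by (auto simp: mem_lower_unipotent_image_K0[OF x])
qed

text \<open>The left cosets of \<open>K0 (j + 1)\<close> in \<open>{k \<in> K0 j. a unit}\<close> are indexed by the residues,
  via the digit of \<open>c/a\<close> at \<open>\<pi>\<^sup>j\<close>.\<close>

lemma K0_unit_corner_eq_UN: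
  "{k \<in> K0 absv q j. absv (fst k) = 1} = (\<Union>t\<in>residues. m2mult (1,0,\<pi>^j*t,1) ` K0 absv q (Suc j))"
proof (intro equalityI subsetI)
  fix k assume "k \<in> {k \<in> K0 absv q j. absv (fst k) = 1}"
  then obtain a b c d where k: "k = (a,b,c,d)" "(a,b,c,d) \<in> GL2O absv" "absv a = 1"
      "absv (c/a) \<le> (1 / real q) ^ j"
    by (cases k rule: prod_cases4) (auto simp: K0_iff)
  then obtain t where t: "t \<in> residues" "absv (c/a - \<pi>^j*t) \<le> (1 / real q) ^ Suc j"
    using residue_digit_exists by blast
  with k have "k \<in> m2mult (1,0,\<pi>^j*t,1) ` K0 absv q (Suc j)"
    by (simp only: mem_lower_unipotent_residue_image_K0)
  with t(1) show "k \<in> (\<Union>t\<in>residues. m2mult (1,0,\<pi>^j*t,1) ` K0 absv q (Suc j))"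
    by blast
next
  fix k assume "k \<in> (\<Union>t\<in>residues. m2mult (1,0,\<pi>^j*t,1) ` K0 absv q (Suc j))"
  then obtain t where t: "t \<in> residues" and "k \<in> m2mult (1,0,\<pi>^j*t,1) ` K0 absv q (Suc j)"
    by blast
  moreover obtain a b c d where k: "k = (a,b,c,d)"
    by (cases k rule: prod_cases4)
  ultimately have "(a,b,c,d) \<in> GL2O absv" "absv a = 1"
      "absv (c/a - \<pi>^j*t) \<le> (1 / real q) ^ Suc j"
    by (simp_all only: mem_lower_unipotent_residue_image_K0)
  moreover from t this(3) have "absv (c/a) \<le> (1 / real q) ^ j"
    by (rule residue_digit_abs_le)
  ultimately show "k \<in> {k \<in> K0 absv q j. absv (fst k) = 1}"
    using k by (simp add: K0_iff)
qed

lemma disjoint_lower_unipotent_images_K0: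
  "disjoint_family_on (\<lambda>t. m2mult (1,0,\<pi>^j*t,1) ` K0 absv q (Suc j)) residues"
  unfolding disjoint_family_on_def
proof (intro ballI impI)
  fix t t' assume t: "t \<in> residues" "t' \<in> residues" "t \<noteq> t'"
  show "m2mult (1,0,\<pi>^j*t,1) ` K0 absv q (Suc j) \<inter> m2mult (1,0,\<pi>^j*t',1) ` K0 absv q (Suc j) = {}"
  proof (rule equals0I)
    fix k assume k: "k \<in> m2mult (1,0,\<pi>^j*t,1) ` K0 absv q (Suc j) \<inter> m2mult (1,0,\<pi>^j*t',1) ` K0 absv q (Suc j)"
    obtain a b c d where "k = (a,b,c,d)"
      by (cases k rule: prod_cases4)
    moreover from k have "k \<in> m2mult (1,0,\<pi>^j*t,1) ` K0 absv q (Suc j)"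
        "k \<in> m2mult (1,0,\<pi>^j*t',1) ` K0 absv q (Suc j)"
      by blast+
    ultimately have "absv (c/a - \<pi>^j*t) \<le> (1 / real q) ^ Suc j" "absv (c/a - \<pi>^j*t') \<le> (1 / real q) ^ Suc j"
      using t by (simp_all only: mem_lower_unipotent_residue_image_K0)
    with t show False
      using residue_digit_unique by blast
  qed
qed

lemma K0_Suc_unit_corner: "{k \<in> K0 absv q (Suc j). absv (fst k) = 1} = K0 absv q (Suc j)"
proof -
  have "(1 / real q) ^ Suc j < 1"
    using q_gt_1 by (intro power_Suc_less_one) auto
  then have "absv a = 1" if "(a,b,c,d) \<in> K0 absv q (Suc j)" for a b c d
    using that GL2O_upper_left_unit[of a b c d] by (simp add: K0_iff)
  then show ?thesis by force
qed

lemma GL2O_eq_unit_corner_Un_swap: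
  "GL2O absv = {k \<in> K0 absv q 0. absv (fst k) = 1} \<union> m2mult (0,1,1,0) ` K0 absv q 1"
proof (intro equalityI subsetI)
  fix k assume "k \<in> GL2O absv"
  moreover obtain a b c d where k: "k = (a,b,c,d)"
    by (cases k rule: prod_cases4)
  ultimately have g: "(a,b,c,d) \<in> GL2O absv"
    by simp
  then consider "absv a = 1" | "absv a < 1"
    by (force simp: GL2O_iff)
  then show "k \<in> {k \<in> K0 absv q 0. absv (fst k) = 1} \<union> m2mult (0,1,1,0) ` K0 absv q 1"
  proof cases
    case 1
    with g show ?thesis
      unfolding k by (simp add: K0_iff GL2O_iff)
  next
    case 2
    with g show ?thesis
      unfolding k by (simp add: mem_swap_image_K0 abs_lt_1_imp_le)
  qed
next
  fix k assume "k \<in> {k \<in> K0 absv q 0. absv (fst k) = 1} \<union> m2mult (0,1,1,0) ` K0 absv q 1"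
  moreover have "m2mult (0,1,1,0) ` K0 absv q 1 \<subseteq> GL2O absv"
    using GL2O_mult[OF swap_in_GL2O] by (auto simp: K0_def simp del: m2mult.simps)
  ultimately show "k \<in> GL2O absv"
    by (auto simp: K0_def)
qed

lemma unit_corner_Int_swap:
  "{k \<in> K0 absv q 0. absv (fst k) = 1} \<inter> m2mult (0,1,1,0) ` K0 absv q 1 = {}"
proof (rule equals0I)
  fix k assume k: "k \<in> {k \<in> K0 absv q 0. absv (fst k) = 1} \<inter> m2mult (0,1,1,0) ` K0 absv q 1"
  obtain a b c d where abcd: "k = (a,b,c,d)"
    by (cases k rule: prod_cases4)
  from k have "absv (fst k) = 1" "k \<in> m2mult (0,1,1,0) ` K0 absv q 1"
    by blast+
  then have "absv a = 1" "absv a \<le> 1 / real q"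
    unfolding abcd by (simp_all only: fst_conv mem_swap_image_K0 power_one_right)
  then show False
    using q_gt_1 by simp
qed

text \<open>For \<open>n \<le> e\<close>, \<open>(e - n + 1) div 2\<close> is the ceiling of \<open>(e - n)/2\<close>; for \<open>n > e\<close> it is \<open>0\<close>
  by truncated subtraction.\<close>

lemma conj_unipotent_in_ZK0_iff_K0:
  assumes k: "(a,b,c,d) \<in> GL2O absv" and y: "absv y = (1 / real q) ^ n"
  shows "m2mult (m2inv (a,b,c,d)) (m2mult (1,y,0,1) (a,b,c,d)) \<in> ZK0 absv q e \<longleftrightarrow>
    (a,b,c,d) \<in> K0 absv q ((e - n + 1) div 2)"
proof -
  have "absv y \<le> 1"
    using y q_gt_1 by (simp add: power_le_one)
  then have "m2mult (m2inv (a,b,c,d)) (m2mult (1,y,0,1) (a,b,c,d)) \<in> ZK0 absv q e \<longleftrightarrow>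
      (1 / real q) ^ n * absv c ^ 2 \<le> (1 / real q) ^ e"
    unfolding conj_unipotent_in_ZK0_iff[OF k] y by simp
  also have "\<dots> \<longleftrightarrow> absv c \<le> (1 / real q) ^ ((e - n + 1) div 2)"
  proof (cases "c = 0")
    case False
    moreover have "absv c \<le> 1"
      using k by (simp add: GL2O_iff)
    ultimately obtain i where i: "absv c = (1 / real q) ^ i"
      by (rule abs_le_1_eq_power)
    have "(1 / real q) ^ n * absv c ^ 2 = (1 / real q) ^ (n + 2 * i)"
      unfolding i by (simp add: power_add power_mult[symmetric] mult.commute)
    moreover have "e \<le> n + 2 * i \<longleftrightarrow> (e - n + 1) div 2 \<le> i"
      by presburger
    ultimately show ?thesis
      unfolding i by (simp add: q_power_le_iff)
  qed simp
  also have "\<dots> \<longleftrightarrow> (a,b,c,d) \<in> K0 absv q ((e - n + 1) div 2)"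
    using k by (simp add: K0_iff)
  finally show ?thesis .
qed

end

section \<open>Haar volumes and the zeta integral\<close>

locale GL2O_haar = local_field +
  fixes dk :: "'a m2 measure"
  assumes haar_dk: "gl2O_haar absv dk"
begin

lemma space_dk: "space dk = GL2O absv"
  and sets_dk: "sets dk = sigma_sets (GL2O absv) {m2ball g r | g r. True}"
  and emeasure_dk_GL2O: "emeasure dk (GL2O absv) = 1"
  and dk_left_invariant: "g \<in> GL2O absv \<Longrightarrow> A \<in> sets dk \<Longrightarrow>
    m2mult g ` A \<in> sets dk \<and> emeasure dk (m2mult g ` A) = emeasure dk A"
  using haar_dk unfolding gl2O_haar_def m2ball_def by blast+

lemma emeasure_dk_finite: "emeasure dk A \<noteq> \<infinity>"
proof -
  interpret finite_measure dk
    by (rule finite_measureI) (simp add: space_dk emeasure_dk_GL2O)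
  show ?thesis by simp
qed

lemma K0_sets_dk: "K0 absv q j \<in> sets dk"
proof -
  obtain G where "finite G" "K0 absv q j = (\<Union>g\<in>G. m2ball g ((1 / real q) ^ j))"
    using K0_eq_finite_UN_m2ball by blast
  moreover have "m2ball g r \<in> sets dk" for g r
    unfolding sets_dk by (rule sigma_sets.Basic) blast
  ultimately show ?thesis
    by auto
qed

lemma K0_unit_corner_sets_dk: "{k \<in> K0 absv q j. absv (fst k) = 1} \<in> sets dk"
  unfolding K0_unit_corner_eq_UN
  using dk_left_invariant[OF lower_unipotent_in_GL2O[OF abs_unif_power_residue_le_1] K0_sets_dk]
    residues(1) by blast

lemma measure_K0_unit_corner:
  "measure dk {k \<in> K0 absv q j. absv (fst k) = 1} = real q * measure dk (K0 absv q (Suc j))"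
  unfolding K0_unit_corner_eq_UN
  using dk_left_invariant[OF lower_unipotent_in_GL2O[OF abs_unif_power_residue_le_1] K0_sets_dk]
    residues(1,2) emeasure_dk_finite
  by (subst measure_UN_disjoint_const[OF _ disjoint_lower_unipotent_images_K0])
     (auto simp: measure_def)

lemma measure_K0_Suc: "measure dk (K0 absv q (Suc j)) = 1 / ((real q + 1) * real q ^ j)"
proof (induction j)
  case 0
  have "1 = measure dk (GL2O absv)"
    using emeasure_dk_GL2O by (simp add: measure_def)
  also have "\<dots> = measure dk {k \<in> K0 absv q 0. absv (fst k) = 1} + measure dk (m2mult (0,1,1,0) ` K0 absv q 1)"
    using dk_left_invariant[OF swap_in_GL2O K0_sets_dk] K0_unit_corner_sets_dk
    by (subst GL2O_eq_unit_corner_Un_swap, intro measure_Union emeasure_dk_finite unit_corner_Int_swap) auto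
  also have "measure dk (m2mult (0,1,1,0) ` K0 absv q 1) = measure dk (K0 absv q 1)"
    using dk_left_invariant[OF swap_in_GL2O K0_sets_dk] by (simp add: measure_def)
  also have "measure dk {k \<in> K0 absv q 0. absv (fst k) = 1} + measure dk (K0 absv q 1) =
      (real q + 1) * measure dk (K0 absv q 1)"
    by (simp add: measure_K0_unit_corner algebra_simps)
  finally show ?case
    using q_gt_1 by (simp add: field_simps)
next
  case (Suc j)
  have "measure dk (K0 absv q (Suc (Suc j))) = measure dk (K0 absv q (Suc j)) / real q"
    using measure_K0_unit_corner[of "Suc j"] q_gt_1 by (simp add: K0_Suc_unit_corner)
  with Suc.IH show ?case
    by simp
qed

lemma measure_K0: "measure dk (K0 absv q j) = K0_volume q j"
proof (cases j)
  case 0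
  have "K0 absv q 0 = GL2O absv"
    by (auto simp: K0_def GL2O_def intO_def)
  with 0 show ?thesis
    using emeasure_dk_GL2O by (simp add: K0_volume_def measure_def)
qed (simp add: K0_volume_def measure_K0_Suc)

end

locale additive_haar_measure = local_field +
  fixes dy :: "'a measure"
  assumes haar_dy: "additive_haar absv dy"
begin

lemma sets_dy: "sets dy = sigma_sets UNIV {{x. absv (x - a) \<le> r} | a r. True}"
  and dy_translation_invariant: "A \<in> sets dy \<Longrightarrow>
    (\<lambda>x. a + x) ` A \<in> sets dy \<and> emeasure dy ((\<lambda>x. a + x) ` A) = emeasure dy A"
  and emeasure_dy_intO: "emeasure dy (intO absv) = 1"
  using haar_dy unfolding additive_haar_def by blast+

definition disc :: "nat \<Rightarrow> 'a set" where
  "disc n = {x. absv x \<le> (1 / real q) ^ n}"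

definition shell :: "nat \<Rightarrow> 'a set" where
  "shell n = {x. absv x = (1 / real q) ^ n}"

lemma disc_sets: "disc n \<in> sets dy"
proof -
  have "disc n = {x. absv (x - 0) \<le> (1 / real q) ^ n}"
    by (simp add: disc_def)
  then show ?thesis
    unfolding sets_dy by (intro sigma_sets.Basic) blast
qed

lemma disc_0: "disc 0 = intO absv"
  by (simp add: disc_def intO_def)

lemma emeasure_disc_finite: "emeasure dy (disc n) \<noteq> \<infinity>"
proof -
  have "disc n \<subseteq> disc 0"
    using q_gt_1 by (auto simp: disc_def intro: order_trans[OF _ power_le_one])
  then have "emeasure dy (disc n) \<le> 1"
    using emeasure_mono[OF _ disc_sets] emeasure_dy_intO by (metis disc_0)
  then show ?thesis
    by (auto simp: top_unique)
qed

lemma mem_translate_disc: "x \<in> (\<lambda>y. a + y) ` disc n \<longleftrightarrow> absv (x - a) \<le> (1 / real q) ^ n"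
  by (auto simp: disc_def image_iff intro: bexI[of _ "x - a"])

lemma disc_eq_UN: "disc n = (\<Union>t\<in>residues. (\<lambda>y. \<pi>^n * t + y) ` disc (Suc n))"
  using residue_digit_exists residue_digit_abs_le
  by (auto simp: mem_translate_disc) (auto simp: disc_def)

lemma disjoint_translates_disc:
  "disjoint_family_on (\<lambda>t. (\<lambda>y. \<pi>^n * t + y) ` disc (Suc n)) residues"
  unfolding disjoint_family_on_def
proof (intro ballI impI)
  fix t t' assume t: "t \<in> residues" "t' \<in> residues" "t \<noteq> t'"
  show "(\<lambda>y. \<pi>^n * t + y) ` disc (Suc n) \<inter> (\<lambda>y. \<pi>^n * t' + y) ` disc (Suc n) = {}"
  proof (rule equals0I)
    fix x assume "x \<in> (\<lambda>y. \<pi>^n * t + y) ` disc (Suc n) \<inter> (\<lambda>y. \<pi>^n * t' + y) ` disc (Suc n)"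
    then have "x \<in> (\<lambda>y. \<pi>^n * t + y) ` disc (Suc n)" "x \<in> (\<lambda>y. \<pi>^n * t' + y) ` disc (Suc n)"
      by blast+
    then have "absv (x - \<pi>^n * t) \<le> (1 / real q) ^ Suc n" "absv (x - \<pi>^n * t') \<le> (1 / real q) ^ Suc n"
      by (simp_all only: mem_translate_disc)
    with t show False
      using residue_digit_unique by blast
  qed
qed

lemma measure_disc: "measure dy (disc n) = (1 / real q) ^ n"
proof (induction n)
  case 0
  show ?case
    using emeasure_dy_intO by (simp add: disc_0 measure_def)
next
  case (Suc n)
  have "measure dy (disc n) = real (card residues) * measure dy (disc (Suc n))"
    using dy_translation_invariant[OF disc_sets] emeasure_disc_finite residues(1,2)
    by (subst disc_eq_UN, subst measure_UN_disjoint_const[OF _ disjoint_translates_disc])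
       (auto simp: measure_def)
  with Suc residues(2) show ?case
    using q_gt_1 by (simp add: field_simps)
qed

lemma shell_eq_Diff: "shell n = disc n - disc (Suc n)"
proof -
  have "absv x = (1 / real q) ^ n" if "absv x \<le> (1 / real q) ^ n" "\<not> absv x \<le> (1 / real q) ^ Suc n" for x
  proof -
    have "x \<noteq> 0" "absv x \<le> 1"
      using that q_gt_1 by (auto intro: order_trans[OF _ power_le_one])
    then obtain m where m: "absv x = (1 / real q) ^ m"
      by (rule abs_le_1_eq_power)
    with that have "m = n"
      using q_power_le_iff[of m n] q_power_le_iff[of m "Suc n"] by (simp del: power_Suc)
    with m show ?thesis by simp
  qed
  moreover have "(1 / real q) ^ Suc n < (1 / real q) ^ n"
    using q_power_le_iff[of n "Suc n"] by (simp del: power_Suc)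
  ultimately show ?thesis
    by (auto simp: shell_def disc_def simp del: power_Suc)
qed

lemma shell_sets: "shell n \<in> sets dy"
  unfolding shell_eq_Diff using disc_sets by blast

lemma emeasure_shell_finite: "emeasure dy (shell n) \<noteq> \<infinity>"
proof -
  have "emeasure dy (shell n) \<le> emeasure dy (disc n)"
    by (intro emeasure_mono disc_sets) (auto simp: shell_eq_Diff)
  with emeasure_disc_finite show ?thesis
    by (auto simp: top_unique)
qed

lemma measure_shell: "measure dy (shell n) = (1 / real q) ^ n * (1 - 1 / real q)"
proof -
  have "disc (Suc n) \<subseteq> disc n"
    using q_power_le_iff[of "Suc n" n] by (auto simp: disc_def simp del: power_Suc)
  then have "measure dy (shell n) = measure dy (disc n) - measure dy (disc (Suc n))"
    unfolding shell_eq_Diff by (intro measure_Diff emeasure_disc_finite disc_sets)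
  then show ?thesis
    by (simp add: measure_disc algebra_simps)
qed

lemma shell_disjoint: "x \<in> shell n \<Longrightarrow> x \<in> shell m \<Longrightarrow> n = m"
  using q_power_le_iff[of n m] q_power_le_iff[of m n] by (auto simp: shell_def)

lemma finite_shells_containing: "finite {n. y \<in> shell n}"
proof (cases "\<exists>m. y \<in> shell m")
  case True
  then obtain m where "y \<in> shell m" by blast
  then have "{n. y \<in> shell n} \<subseteq> {m}"
    using shell_disjoint by blast
  then show ?thesis
    using finite_subset by blast
qed simp


lemma suminf_indicator_shell:
  fixes f :: "nat \<Rightarrow> 'b::real_normed_vector"
  assumes "y \<in> shell m"
  shows "(\<Sum>n. indicator (shell n) y *\<^sub>R f n) = f m"
proof -
  have "indicator (shell n) y *\<^sub>R f n = (if n = m then f m else 0)" for n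
  proof (cases "n = m")
    case False
    then have "y \<notin> shell n"
      using assms shell_disjoint by blast
    with False show ?thesis
      by simp
  qed (simp add: assms)
  then show ?thesis
    using sums_single[of m "\<lambda>_. f m"] by (simp add: sums_iff)
qed

text \<open>On the shell \<open>|y| = q\<^sup>-\<^sup>n\<close> the integrand is constant, and the factor \<open>q/(q - 1) |y|\<^sup>-\<^sup>1\<close>
  exactly cancels the volume of the shell.\<close>

lemma zeta_integrand_eq_shell_series:
  assumes "\<kappa> \<in> GL2O absv"
  shows "(if y = 0 then 0 else
           complex_of_real (real q / (real q - 1)) *
           complex_of_real (indicator (ZK0 absv q e) (m2mult (m2inv \<kappa>) (m2mult (1, y, 0, 1) \<kappa>))) *
           complex_of_real (absv y) powr s / complex_of_real (absv y))
    = (\<Sum>n. indicator (shell n) y *\<^sub>R (complex_of_real (indicator (K0 absv q ((e - n + 1) div 2)) \<kappa>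
          / measure dy (shell n)) * ((of_nat q :: complex) powr (- s)) ^ n))"
    (is "?f y = (\<Sum>n. indicator (shell n) y *\<^sub>R ?h n)")
proof -
  obtain a b c d where \<kappa>: "\<kappa> = (a,b,c,d)"
    by (cases \<kappa> rule: prod_cases4)
  with assms have k: "(a,b,c,d) \<in> GL2O absv"
    by simp
  show ?thesis
  proof (cases "\<exists>m. y \<in> shell m")
    case True
    then obtain m where m: "y \<in> shell m" by blast
    then have y: "absv y = (1 / real q) ^ m"
      by (simp add: shell_def)
    then have "y \<noteq> 0"
      using q_gt_1 by auto
    have "real q / (real q - 1) / absv y = 1 / measure dy (shell m)"
      unfolding y using q_gt_1 by (simp add: measure_shell field_simps)
    then have const: "complex_of_real (real q / (real q - 1)) / complex_of_real (absv y) =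
        complex_of_real (1 / measure dy (shell m))"
      by (metis of_real_divide)
    have ind: "indicator (ZK0 absv q e) (m2mult (m2inv \<kappa>) (m2mult (1,y,0,1) \<kappa>)) =
        indicator (K0 absv q ((e - m + 1) div 2)) \<kappa>"
      unfolding \<kappa> indicator_def conj_unipotent_in_ZK0_iff_K0[OF k y] by (rule refl)
    have pow: "complex_of_real (absv y) powr s = ((of_nat q :: complex) powr (- s)) ^ m"
      unfolding y using q_gt_1 by (intro of_real_inverse_power_powr) simp
    have "?f y = complex_of_real (real q / (real q - 1)) / complex_of_real (absv y) *
        (of_real (indicator (K0 absv q ((e - m + 1) div 2)) \<kappa>) * ((of_nat q :: complex) powr (- s)) ^ m)"
      using \<open>y \<noteq> 0\<close> by (simp add: ind pow divide_inverse mult_ac)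
    also have "\<dots> = ?h m"
      unfolding const by (simp add: divide_inverse mult_ac)
    finally show ?thesis
      unfolding suminf_indicator_shell[OF m] .
  next
    case False
    have "y = 0 \<or> \<not> absv y \<le> 1"
    proof (rule ccontr)
      assume "\<not> (y = 0 \<or> \<not> absv y \<le> 1)"
      then obtain m where "absv y = (1 / real q) ^ m"
        using abs_le_1_eq_power by blast
      with False show False
        unfolding shell_def by blast
    qed
    then have "m2mult (m2inv \<kappa>) (m2mult (1,y,0,1) \<kappa>) \<notin> ZK0 absv q e \<or> y = 0"
      unfolding \<kappa> conj_unipotent_in_ZK0_iff[OF k] by blast
    with False show ?thesis
      by auto
  qed
qed
end

locale zeta_integral = GL2O_haar absv q \<pi> dk + additive_haar_measure absv q \<pi> dy
  for absv :: "'a::field \<Rightarrow> real" and q \<pi> dk dy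
begin

lemma inner_integral:
  assumes "1 < Re s" and "\<kappa> \<in> GL2O absv"
  shows "(LINT y|dy. (if y = 0 then 0 else
           complex_of_real (real q / (real q - 1)) *
           complex_of_real (indicator (ZK0 absv q e) (m2mult (m2inv \<kappa>) (m2mult (1, y, 0, 1) \<kappa>))) *
           complex_of_real (absv y) powr s / complex_of_real (absv y)))
    = (\<Sum>n. indicator (K0 absv q ((e - n + 1) div 2)) \<kappa> *\<^sub>R ((of_nat q :: complex) powr (- s)) ^ n)"
proof -
  define X where "X = (of_nat q :: complex) powr (- s)"
  define ind :: "nat \<Rightarrow> real" where "ind n = indicator (K0 absv q ((e - n + 1) div 2)) \<kappa>" for n
  define h where "h n = complex_of_real (ind n / measure dy (shell n)) * X ^ n" for n
  have X: "norm X < 1"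
    unfolding X_def using q_gt_1 assms(1) by (intro norm_of_nat_powr_neg_less) auto
  have shell_pos: "0 < measure dy (shell n)" for n
    using q_gt_1 by (simp add: measure_shell)
  have "(\<lambda>n. measure dy (shell n) *\<^sub>R h n) sums (\<integral>y. (\<Sum>n. indicator (shell n) y *\<^sub>R h n) \<partial>dy)"
  proof (rule sums_integral_indicator_series[OF shell_sets emeasure_shell_finite])
    show "summable (\<lambda>n. indicator (shell n) y * norm (h n))" for y
      by (rule summable_finite[OF finite_shells_containing[of y]]) simp
    have "norm (measure dy (shell n) * norm (h n)) \<le> norm X ^ n" for n
      using shell_pos[of n] by (simp add: h_def ind_def norm_mult norm_divide norm_power indicator_def)
    then show "summable (\<lambda>n. measure dy (shell n) * norm (h n))"
      using X by (intro summable_comparison_test'[OF summable_geometric[of "norm X"]]) auto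
  qed
  moreover have "measure dy (shell n) *\<^sub>R h n = ind n *\<^sub>R X ^ n" for n
    using shell_pos[of n] by (simp add: h_def scaleR_conv_of_real)
  ultimately show ?thesis
    unfolding zeta_integrand_eq_shell_series[OF assms(2)] h_def ind_def X_def by (simp add: sums_iff)
qed

lemma Zv_sums:
  assumes "1 < Re s"
  shows "(\<lambda>n. of_real (K0_volume q ((e - n + 1) div 2)) * ((of_nat q :: complex) powr (- s)) ^ n)
    sums Zv absv q dy dk e s"
proof -
  define X where "X = (of_nat q :: complex) powr (- s)"
  define A where "A n = K0 absv q ((e - n + 1) div 2)" for n
  have X: "norm X < 1"
    unfolding X_def using q_gt_1 assms(1) by (intro norm_of_nat_powr_neg_less) auto
  have "Zv absv q dy dk e s = (\<integral>k. (\<Sum>n. indicator (A n) k *\<^sub>R X ^ n) \<partial>dk)"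
    unfolding Zv_def
    by (intro Bochner_Integration.integral_cong refl) (simp add: space_dk A_def X_def inner_integral[OF assms])
  moreover have "(\<lambda>n. measure dk (A n) *\<^sub>R X ^ n) sums \<dots>"
  proof (rule sums_integral_indicator_series)
    show "A n \<in> sets dk" "emeasure dk (A n) \<noteq> \<infinity>" for n
      unfolding A_def by (rule K0_sets_dk, rule emeasure_dk_finite)
    have geometric: "summable (\<lambda>n. norm X ^ n)"
      using X by (simp add: summable_geometric)
    show "summable (\<lambda>n. indicator (A n) k * norm (X ^ n))" for k
      by (rule summable_comparison_test'[OF geometric]) (simp add: norm_power indicator_def)
    have "measure dk (A n) \<le> 1" for n
      unfolding A_def measure_K0 using q_gt_1 by (intro K0_volume_le_1) simp
    then show "summable (\<lambda>n. measure dk (A n) * norm (X ^ n))"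
      by (intro summable_comparison_test'[OF geometric]) (simp add: norm_power mult_left_le_one_le)
  qed
  ultimately show ?thesis
    unfolding A_def X_def measure_K0 by (simp add: scaleR_conv_of_real)
qed

end

theorem lemma3p12:
  fixes absv :: "'a::field \<Rightarrow> real" and q e :: nat and unif :: 'a
    and dy :: "'a measure" and dk :: "'a m2 measure" and s :: complex
  assumes "nonarch_local_field absv q unif"
    and "additive_haar absv dy"
    and "gl2O_haar absv dk"
    and "1 < Re s"
  shows "Zv absv q dy dk e s = gv q e s / (1 - of_nat q powr (- s))"
proof -
  interpret zeta_integral absv q unif dk dy
    using assms(1-3)
    by unfold_locales (auto simp: nonarch_local_field_def)
  define X where "X = (of_nat q :: complex) powr (- s)"
  have "0 < q" "X \<noteq> 0" "norm X < 1"
    using q_gt_1 assms(4) norm_of_nat_powr_neg_less[of q s] by (auto simp: X_def)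
  then have "Zv absv q dy dk e s = gv_X q X e / (1 - X)"
    using Zv_sums[OF assms(4)] K0_volume_series_sums sums_unique2 unfolding X_def by blast
  then show ?thesis
    using q_gt_1 assms(4) by (simp add: X_def gv_eq_gv_X)
qed

end
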